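(* Consider a linear many-worlds theory in which every permutation of worlds is an allowed transformation, i.e. every operator $T$ with $T_{ij}=\delta_{i,\pi(j)}$ for a bijection $\pi$ of $\{0,1,2,\dots\}$ is allowed. Let $p$ be a probability rule for this theory satisfying Axioms (A1)–(A3). Let $v=\sum_{n=0}^{N-1}v_n\lvert n\rangle$ be an allowed bounded state, so that $v_n=0$ for all $n\ge N$. If $v_n=v_m$ for some $n,m$, then $p_n(v)=p_m(v)$.
   Context: A linear many-worlds theory consists of the following data. The worlds are the vectors $\lvert n\rangle$, $n\in\{0,1,2,\dots\}$, of a countably infinite orthonormal basis of a real or complex vector space. A state is a vector $v=\sum_n v_n\lvert n\rangle$, and $v_n=\langle n\vert v\rangle$ is the amplitude of world $n$. A transformation is a linear operator $T$ with matrix elements $T_{ij}=\langle i\rvert T\lvert j\rangle$, acting by $v\mapsto v'=Tv$. A theory specifies a set of allowed states and a set of allowed transformations, and every allowed transformation maps allowed states to allowed states. A state is bounded if only finitely many of its amplitudes are nonzero. A probability rule assigns to each allowed state $v$ a sequence $(p_n(v))_{n\ge 0}$ of nonnegative reals with $\sum_n p_n(v)=1$. For a transformation $T$ and state $v$ we write $p'_n=p_n(Tv)$. The axioms are: (A1) Present state dependence: $p_n$ depends only on the present state $v$, so $p$ is a function of the state alone. (A2) Weak connection with amplitudes: for every allowed state $v$, $v_n=0$ implies $p_n(v)=0$. (A3) Weak connection with transformations: for every allowed state $v$ and allowed transformation $T$, and every partition of $\{0,1,2,\dots\}$ into subsets $\mathcal S_k$ such that $T_{ij}=0$ whenever $i$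 and $j$ lie in different subsets, we have $\sum_{n\in\mathcal S_k}p_n(v)=\sum_{n\in\mathcal S_k}p_n(Tv)$ for every $k$. *)

theory Defs
  imports "HOL-Analysis.Analysis"
begin

text \<open>States are identified with their amplitude sequences v :: nat => 'a, with
  v n the amplitude of world n.\<close>

definition basis_vec :: "nat \<Rightarrow> (nat \<Rightarrow> 'a::real_normed_field)" where
  "basis_vec j = (\<lambda>k. if k = j then 1 else 0)"

definition mat_el :: "((nat \<Rightarrow> 'a::real_normed_field) \<Rightarrow> (nat \<Rightarrow> 'a)) \<Rightarrow> nat \<Rightarrow> nat \<Rightarrow> 'a" where
  "mat_el T i j = T (basis_vec j) i"

definition linear_op :: "((nat \<Rightarrow> 'a::real_normed_field) \<Rightarrow> (nat \<Rightarrow> 'a)) \<Rightarrow> bool" where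
  "linear_op T \<longleftrightarrow>
     (\<forall>u w. T (\<lambda>k. u k + w k) = (\<lambda>k. T u k + T w k)) \<and>
     (\<forall>c u. T (\<lambda>k. c * u k) = (\<lambda>k. c * T u k))"

definition lin_mw_theory ::
  "(nat \<Rightarrow> 'a::real_normed_field) set \<Rightarrow> ((nat \<Rightarrow> 'a) \<Rightarrow> (nat \<Rightarrow> 'a)) set \<Rightarrow> bool" where
  "lin_mw_theory States Trans \<longleftrightarrow>
     (\<forall>T\<in>Trans. linear_op T) \<and> (\<forall>T\<in>Trans. \<forall>v\<in>States. T v \<in> States)"

text \<open>Permutation operator with T_ij = delta_{i, pi j}, i.e. (T v) i = v (inv pi i).\<close>
definition perm_op :: "(nat \<Rightarrow> nat) \<Rightarrow> (nat \<Rightarrow> 'a::real_normed_field) \<Rightarrow> (nat \<Rightarrow> 'a)" where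
  "perm_op \<pi> v = (\<lambda>i. v (inv \<pi> i))"

definition is_partition :: "nat set set \<Rightarrow> bool" where
  "is_partition S \<longleftrightarrow> \<Union>S = UNIV \<and> (\<forall>A\<in>S. \<forall>B\<in>S. A \<noteq> B \<longrightarrow> A \<inter> B = {})"

text \<open>A probability rule p (a function of the present state alone, axiom A1)
  satisfying axioms A2 and A3.\<close>
definition prob_rule ::
  "(nat \<Rightarrow> 'a::real_normed_field) set \<Rightarrow> ((nat \<Rightarrow> 'a) \<Rightarrow> (nat \<Rightarrow> 'a)) set
     \<Rightarrow> ((nat \<Rightarrow> 'a) \<Rightarrow> nat \<Rightarrow> real) \<Rightarrow> bool" where
  "prob_rule States Trans p \<longleftrightarrow>
     (\<forall>v\<in>States. (\<forall>n. p v n \<ge> 0) \<and> (p v) sums 1) \<and>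
     (\<forall>v\<in>States. \<forall>n. v n = 0 \<longrightarrow> p v n = 0) \<and>
     (\<forall>v\<in>States. \<forall>T\<in>Trans. \<forall>S. is_partition S \<and>
        (\<forall>i j. (\<exists>A\<in>S. i \<in> A \<and> j \<notin> A) \<longrightarrow> mat_el T i j = 0) \<longrightarrow>
        (\<forall>A\<in>S. infsum (p v) A = infsum (p (T v)) A))"

end

theory Submission
  imports Defs "HOL-Combinatorics.Transposition"
begin

text \<open>Pick a world w with v w = 0 different from n and m. Swapping m with w moves the
  probability of m to w; swapping n with w moves the probability of n to w. Because
  v n = v m, the two swapped states differ only by the swap of n and m, which leaves
  w in place and therefore does not change the probability of w.
  Each swap step is an instance of axiom A3 for a partition into blocks invariant
  under the permutation, combined with axiom A2 for the world of amplitude zero.\<close>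

lemma perm_op_transpose:
  "perm_op (Transposition.transpose a b) u = u \<circ> Transposition.transpose a b"
  by (simp add: perm_op_def fun_eq_iff)

lemma mat_el_perm_op:
  assumes "bij \<pi>"
  shows "mat_el (perm_op \<pi>) i j = (if \<pi> j = i then 1 else 0)"
proof -
  have "inv \<pi> i = j \<longleftrightarrow> \<pi> j = i"
    using bij_inv_eq_iff[OF assms] by metis
  then show ?thesis
    by (simp add: mat_el_def perm_op_def basis_vec_def)
qed

lemma prob_rule_zero_amplitude:
  assumes "prob_rule States Trans p" "v \<in> States" "v n = 0"
  shows "p v n = 0"
proof -
  have "\<forall>v\<in>States. \<forall>n. v n = 0 \<longrightarrow> p v n = 0"
    using assms(1) unfolding prob_rule_def by (elim conjE)
  then show ?thesis
    using assms(2,3) by simp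
qed

lemma prob_rule_block_conservation:
  assumes "prob_rule States Trans p" "v \<in> States" "T \<in> Trans" "is_partition S"
    and "\<And>i j. \<exists>A\<in>S. i \<in> A \<and> j \<notin> A \<Longrightarrow> mat_el T i j = 0"
    and "A \<in> S"
  shows "infsum (p v) A = infsum (p (T v)) A"
proof -
  have "\<forall>v\<in>States. \<forall>T\<in>Trans. \<forall>S. is_partition S \<and>
          (\<forall>i j. (\<exists>A\<in>S. i \<in> A \<and> j \<notin> A) \<longrightarrow> mat_el T i j = 0) \<longrightarrow>
          (\<forall>A\<in>S. infsum (p v) A = infsum (p (T v)) A)"
    using assms(1) unfolding prob_rule_def by (elim conjE)
  then show ?thesis
    using assms(2-6) by blast
qed

lemma prob_rule_perm_invariant_block:
  assumes rule: "prob_rule States Trans p"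
    and v: "v \<in> States" and T: "perm_op \<pi> \<in> Trans"
    and "bij \<pi>" and inv: "\<pi> ` A = A"
  shows "infsum (p v) A = infsum (p (perm_op \<pi> v)) A"
proof (rule prob_rule_block_conservation[OF rule v T])
  show "is_partition {A, - A}"
    by (auto simp: is_partition_def)
  have "\<pi> ` (- A) = - A"
    using inv \<open>bij \<pi>\<close> by (simp add: bij_image_Compl_eq)
  then show "mat_el (perm_op \<pi>) i j = 0" if "\<exists>B\<in>{A, - A}. i \<in> B \<and> j \<notin> B" for i j
    using that inv \<open>bij \<pi>\<close> by (auto simp: mat_el_perm_op)
qed simp

lemma prob_rule_transpose_moves:
  assumes rule: "prob_rule States Trans p" and mw: "lin_mw_theory States Trans"
    and u: "u \<in> States" and T: "perm_op (Transposition.transpose a b) \<in> Trans"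
    and "u b = 0" "a \<noteq> b"
  shows "p (perm_op (Transposition.transpose a b) u) b = p u a"
proof -
  let ?u' = "perm_op (Transposition.transpose a b) u"
  have "?u' \<in> States"
    using mw u T unfolding lin_mw_theory_def by blast
  moreover have "?u' a = 0"
    using \<open>u b = 0\<close> by (simp add: perm_op_transpose)
  ultimately have "p ?u' a = 0" "p u b = 0"
    using rule u \<open>u b = 0\<close> prob_rule_zero_amplitude by blast+
  moreover have "infsum (p u) {a, b} = infsum (p ?u') {a, b}"
    by (rule prob_rule_perm_invariant_block[OF rule u T bij_transpose]) auto
  ultimately show ?thesis
    using \<open>a \<noteq> b\<close> by simp
qed

lemma prob_rule_transpose_fixes:
  assumes rule: "prob_rule States Trans p"
    and u: "u \<in> States" and T: "perm_op (Transposition.transpose a b) \<in> Trans"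
    and "c \<noteq> a" "c \<noteq> b"
  shows "p (perm_op (Transposition.transpose a b) u) c = p u c"
  using prob_rule_perm_invariant_block[OF rule u T bij_transpose, of "{c}"] assms(4,5) by simp

theorem lemma1:
  fixes States :: "(nat \<Rightarrow> 'a::real_normed_field) set"
    and Trans :: "((nat \<Rightarrow> 'a) \<Rightarrow> (nat \<Rightarrow> 'a)) set"
    and p :: "(nat \<Rightarrow> 'a) \<Rightarrow> nat \<Rightarrow> real"
    and v :: "nat \<Rightarrow> 'a" and N n m :: nat
  assumes "lin_mw_theory States Trans"
    and "\<forall>\<pi>::nat \<Rightarrow> nat. bij \<pi> \<longrightarrow> perm_op \<pi> \<in> Trans"
    and "prob_rule States Trans p"
    and "v \<in> States"
    and "\<forall>k\<ge>N. v k = 0"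
    and "v n = v m"
  shows "p v n = p v m"
proof (cases "n = m")
  case False
  define w where "w = N + n + m + 1"
  have "v w = 0" "w \<noteq> n" "w \<noteq> m"
    using assms(5) by (auto simp: w_def)
  have T: "perm_op (Transposition.transpose a b) \<in> Trans" for a b :: nat
    using assms(2) by simp
  define x where "x = perm_op (Transposition.transpose m w) v"
  have "x \<in> States"
    using assms(1,4) T by (simp add: x_def lin_mw_theory_def)
  have swap_nm:
    "perm_op (Transposition.transpose n m) x = perm_op (Transposition.transpose n w) v"
    using assms(6) False \<open>w \<noteq> n\<close> \<open>w \<noteq> m\<close>
    by (auto simp: x_def perm_op_transpose fun_eq_iff Transposition.transpose_def)
  have "p v n = p (perm_op (Transposition.transpose n w) v) w"
    using prob_rule_transpose_moves[OF assms(3,1,4) T \<open>v w = 0\<close>] \<open>w \<noteq> n\<close> by simp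
  also have "\<dots> = p (perm_op (Transposition.transpose n m) x) w"
    by (simp only: swap_nm)
  also have "\<dots> = p x w"
    using prob_rule_transpose_fixes[OF assms(3) \<open>x \<in> States\<close> T] \<open>w \<noteq> n\<close> \<open>w \<noteq> m\<close> by simp
  also have "\<dots> = p v m"
    using prob_rule_transpose_moves[OF assms(3,1,4) T \<open>v w = 0\<close>] \<open>w \<noteq> m\<close>
    by (simp add: x_def)
  finally show ?thesis .
qed simp

end
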